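(* Let $X$ be a normal projective variety over a number field $K$ whose nef cone $\mathrm{Nef}(X)_{\mathbb{R}}\subseteq N^1(X)_{\mathbb{R}}$ is finitely generated (not necessarily rational). Let $f\colon X\to X$ be a surjective endomorphism such that $f^*$ maps each ray of $\mathrm{Nef}(X)_{\mathbb{R}}$ to itself and all eigenvalues of $f^*$ are positive. Then $\mathrm{Nef}(X)_{\mathbb{R}}$ separates the $\lambda$-eigenspace for some eigenvalue $\lambda$ of $f^*$ if and only if $f^*$ acts on $N^1(X)_{\mathbb{R}}$ as a dilation (multiplication by a scalar).
   Context: For an invertible diagonalizable linear map $T$ of a finite-dimensional real vector space $V$ and a full-dimensional pointed closed cone $C$ with $T(C)=C$ whose rays contain a basis of eigenvectors of $T$, $C$ separates the $\lambda$-eigenspace if there are $\lambda$-eigenvectors $v,w$ that do not lie on a common (proper) face of $C$. Here $T=f^*$ on $N^1(X)_{\mathbb{R}}$ and $C=\mathrm{Nef}(X)_{\mathbb{R}}$. *)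

theory Defs
  imports "HOL-Analysis.Analysis"
begin

definition finitely_generated_cone :: "'a::real_vector set \<Rightarrow> bool" where
  "finitely_generated_cone C \<longleftrightarrow> (\<exists>S. finite S \<and> C = convex_cone hull S)"

definition cone_ray :: "'a::euclidean_space set \<Rightarrow> 'a set \<Rightarrow> bool" where
  "cone_ray C R \<longleftrightarrow> R face_of C \<and> aff_dim R = 1"

definition is_eigenvalue :: "('a::real_vector \<Rightarrow> 'a) \<Rightarrow> real \<Rightarrow> bool" where
  "is_eigenvalue T mu \<longleftrightarrow> (\<exists>v. v \<noteq> 0 \<and> T v = mu *\<^sub>R v)"

definition separates_eigenspace ::
  "'a::real_vector set \<Rightarrow> ('a \<Rightarrow> 'a) \<Rightarrow> real \<Rightarrow> bool" where
  "separates_eigenspace C T mu \<longleftrightarrow>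
     (\<exists>v w. v \<noteq> 0 \<and> w \<noteq> 0 \<and> T v = mu *\<^sub>R v \<and> T w = mu *\<^sub>R w \<and>
        v \<in> C \<and> w \<in> C \<and>
        \<not> (\<exists>F. F face_of C \<and> F \<noteq> C \<and> v \<in> F \<and> w \<in> F))"

end

theory Submission
  imports Defs
begin

text \<open>
  Since C is pointed and finitely generated, some linear functional a is positive on
  C - {0}, and the base K = C \<inter> {a = 1} is compact; by Krein-Milman K is the convex hull
  of its extreme points, each of which spans a ray of C and is therefore an eigenvector.
  If the \<mu>-eigenvectors v, w lie on no common proper face, their midpoint u is an
  interior \<mu>-eigenvector. For a ray eigenvector e with eigenvalue l we have
  u - \<epsilon> e \<in> C, and applying (T/\<mu>)^n keeps u - \<epsilon> (l/\<mu>)^n e in C, which forces l \<le> \<mu>;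
  the same argument for the inverse of T gives \<mu> \<le> l. So T = \<mu> on K, hence on C,
  which spans the space. Conversely, for a dilation every interior point of C is an
  eigenvector lying on no proper face.
\<close>

lemma zero_face_of_pointed_cone:
  fixes C :: "'a::real_vector set"
  assumes "conic C" and "0 \<in> C" and pointed: "C \<inter> uminus ` C \<subseteq> {0}"
  shows "{0} face_of C"
  unfolding face_of_singleton extreme_point_of_def
proof (intro conjI ballI)
  fix x y assume x: "x \<in> C" and y: "y \<in> C"
  show "0 \<notin> open_segment x y"
  proof
    assume "0 \<in> open_segment x y"
    then obtain t where t: "0 < t" "t < 1" and sum0: "(1 - t) *\<^sub>R x + t *\<^sub>R y = 0"
      by (auto simp: in_segment)
    have "(1 - t) *\<^sub>R x \<in> C" "t *\<^sub>R y \<in> C"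
      using \<open>conic C\<close> x y t by (auto intro: conic_mul)
    moreover have "(1 - t) *\<^sub>R x = - (t *\<^sub>R y)"
      using sum0 by (simp add: eq_neg_iff_add_eq_0)
    ultimately have "(1 - t) *\<^sub>R x = 0" "t *\<^sub>R y = 0"
      using pointed by force+
    then have "x = y"
      using t by simp
    then show False
      using \<open>0 \<in> open_segment x y\<close> by simp
  qed
qed (use assms in auto)

lemma conic_hull_compact_base:
  fixes P :: "'a::euclidean_space set"
  assumes "compact P" and "convex P" and "0 \<notin> P"
  obtains a where "\<And>y. y \<in> conic hull P \<Longrightarrow> y \<noteq> 0 \<Longrightarrow> 0 < a \<bullet> y"
    and "compact (conic hull P \<inter> {y. a \<bullet> y = 1})"
proof -
  obtain a b where "0 < b" and ab: "\<And>x. x \<in> P \<Longrightarrow> b < a \<bullet> x"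
    using separating_hyperplane_closed_0 assms compact_imp_closed by metis
  then have aP: "0 < a \<bullet> x" if "x \<in> P" for x
    using that less_trans by blast
  have "conic hull P \<inter> {y. a \<bullet> y = 1} = (\<lambda>x. (1 / (a \<bullet> x)) *\<^sub>R x) ` P"
  proof (intro equalityI subsetI)
    fix y assume "y \<in> conic hull P \<inter> {y. a \<bullet> y = 1}"
    then obtain c x where "y = c *\<^sub>R x" "x \<in> P" "c * (a \<bullet> x) = 1"
      by (auto simp: conic_hull_explicit)
    moreover have "c = 1 / (a \<bullet> x)"
      using aP[OF \<open>x \<in> P\<close>] \<open>c * (a \<bullet> x) = 1\<close> by (simp add: field_simps)
    ultimately show "y \<in> (\<lambda>x. (1 / (a \<bullet> x)) *\<^sub>R x) ` P"
      by blast
  next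
    fix y assume "y \<in> (\<lambda>x. (1 / (a \<bullet> x)) *\<^sub>R x) ` P"
    then obtain x where "x \<in> P" and y: "y = (1 / (a \<bullet> x)) *\<^sub>R x"
      by blast
    then have "y \<in> conic hull P"
      using aP[OF \<open>x \<in> P\<close>] by (simp add: conicD[OF conic_conic_hull] hull_inc)
    moreover have "a \<bullet> y = 1"
      using aP[OF \<open>x \<in> P\<close>] y by simp
    ultimately show "y \<in> conic hull P \<inter> {y. a \<bullet> y = 1}"
      by blast
  qed
  moreover have "continuous_on P (\<lambda>x. (1 / (a \<bullet> x)) *\<^sub>R x)"
    using aP by (intro continuous_intros) force
  ultimately have "compact (conic hull P \<inter> {y. a \<bullet> y = 1})"
    using compact_continuous_image \<open>compact P\<close> by metis
  moreover have "0 < a \<bullet> y" if "y \<in> conic hull P" "y \<noteq> 0" for y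
    using that aP by (force simp: conic_hull_explicit)
  ultimately show thesis
    using that by blast
qed

lemma pointed_finitely_generated_cone_compact_base:
  fixes C :: "'a::euclidean_space set"
  assumes "finitely_generated_cone C" and pointed: "C \<inter> uminus ` C \<subseteq> {0}"
  obtains a where "\<And>y. y \<in> C \<Longrightarrow> y \<noteq> 0 \<Longrightarrow> 0 < a \<bullet> y"
    and "compact (C \<inter> {y. a \<bullet> y = 1})"
proof -
  obtain S where "finite S" and C: "C = convex_cone hull S"
    using assms by (auto simp: finitely_generated_cone_def)
  define P where "P = convex hull (S - {0})"
  have "convex_cone hull insert 0 (S - {0}) = convex_cone hull (S - {0})"
    by (rule hull_redundant[OF convex_cone_hull_contains_0])
  then have "C = convex_cone hull (S - {0})"
    using C by (cases "0 \<in> S") (simp_all add: insert_absorb)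
  then have C_eq: "C = insert 0 (conic hull P)"
    by (simp add: P_def convex_cone_hull_separate)
  have "0 \<notin> P"
  proof
    assume "0 \<in> P"
    have "{0} face_of C"
      by (rule zero_face_of_pointed_cone[OF _ _ pointed])
        (simp_all add: C conic_convex_cone_hull convex_cone_hull_contains_0)
    then have "{0} face_of P"
      by (rule face_of_subset) (use \<open>0 \<in> P\<close> C_eq hull_subset[of P conic] in auto)
    then have "0 \<in> S - {0}"
      unfolding face_of_singleton P_def by (rule extreme_point_of_convex_hull)
    then show False
      by simp
  qed
  moreover have "compact P" "convex P"
    using \<open>finite S\<close> by (simp_all add: P_def finite_imp_compact_convex_hull)
  ultimately obtain a where "\<And>y. y \<in> conic hull P \<Longrightarrow> y \<noteq> 0 \<Longrightarrow> 0 < a \<bullet> y"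
    and "compact (conic hull P \<inter> {y. a \<bullet> y = 1})"
    using conic_hull_compact_base by blast
  moreover have "C \<inter> {y. a \<bullet> y = 1} = conic hull P \<inter> {y. a \<bullet> y = 1}"
    using C_eq by auto
  ultimately show thesis
    using that C_eq by auto
qed

lemma extreme_point_of_cone_base_summand:
  fixes C :: "'a::real_inner set"
  assumes "conic C" and pos: "\<And>y. y \<in> C \<Longrightarrow> y \<noteq> 0 \<Longrightarrow> 0 < a \<bullet> y"
    and e: "e extreme_point_of (C \<inter> {y. a \<bullet> y = 1})"
    and "p \<in> C" "q \<in> C" "p + q = e"
  shows "p = (a \<bullet> p) *\<^sub>R e"
proof (cases "p = 0 \<or> q = 0")
  case True
  moreover have "a \<bullet> e = 1"
    using e by (simp add: extreme_point_of_def)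
  ultimately show ?thesis
    using \<open>p + q = e\<close> by auto
next
  case False
  define p' where "p' = (1 / (a \<bullet> p)) *\<^sub>R p"
  define q' where "q' = (1 / (a \<bullet> q)) *\<^sub>R q"
  have ap: "0 < a \<bullet> p" and aq: "0 < a \<bullet> q"
    using False pos \<open>p \<in> C\<close> \<open>q \<in> C\<close> by auto
  have sum1: "a \<bullet> p + a \<bullet> q = 1"
    using e \<open>p + q = e\<close> by (auto simp: extreme_point_of_def inner_add_right)
  have "p' \<in> C \<inter> {y. a \<bullet> y = 1}" "q' \<in> C \<inter> {y. a \<bullet> y = 1}"
    using ap aq \<open>conic C\<close> \<open>p \<in> C\<close> \<open>q \<in> C\<close> by (auto simp: p'_def q'_def conic_mul)
  moreover have "e = (a \<bullet> p) *\<^sub>R p' + (a \<bullet> q) *\<^sub>R q'"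
    using ap aq \<open>p + q = e\<close> by (simp add: p'_def q'_def)
  then have e_eq: "e = (1 - a \<bullet> q) *\<^sub>R p' + (a \<bullet> q) *\<^sub>R q'"
    using sum1 by (simp add: eq_diff_eq)
  moreover have "a \<bullet> q < 1"
    using ap sum1 by linarith
  ultimately have "p' = q'"
    using e aq unfolding extreme_point_of_def in_segment by blast
  then have "e = p'"
    using e_eq by (simp add: algebra_simps)
  then show ?thesis
    using ap by (simp add: p'_def)
qed

lemma extreme_point_of_cone_base_ray_summand:
  fixes C :: "'a::real_inner set"
  assumes "conic C" and pos: "\<And>y. y \<in> C \<Longrightarrow> y \<noteq> 0 \<Longrightarrow> 0 < a \<bullet> y"
    and e: "e extreme_point_of (C \<inter> {y. a \<bullet> y = 1})"
    and p: "p \<in> C" and q: "q \<in> C" and "p + q \<in> conic hull {e}"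
  shows "p \<in> conic hull {e}"
proof -
  obtain t where "0 \<le> t" and t: "p + q = t *\<^sub>R e"
    using \<open>p + q \<in> conic hull {e}\<close> by (auto simp: conic_hull_explicit)
  have nonneg: "0 \<le> a \<bullet> y" if "y \<in> C" for y
    using pos[OF that] by (cases "y = 0") auto
  have "p = (a \<bullet> p) *\<^sub>R e"
  proof (cases "t = 0")
    case True
    then have "a \<bullet> p + a \<bullet> q = 0"
      using arg_cong[OF t, of "inner a"] by (simp add: inner_add_right)
    then have "a \<bullet> p = 0"
      using nonneg[OF p] nonneg[OF q] by linarith
    then have "p = 0"
      using pos p by fastforce
    then show ?thesis
      by simp
  next
    case False
    have "(1 / t) *\<^sub>R p + (1 / t) *\<^sub>R q = e"
      using t False by (simp flip: scaleR_add_right)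
    moreover have "(1 / t) *\<^sub>R p \<in> C" "(1 / t) *\<^sub>R q \<in> C"
      using p q \<open>0 \<le> t\<close> \<open>conic C\<close> by (simp_all add: conic_mul)
    ultimately have "(1 / t) *\<^sub>R p = (a \<bullet> ((1 / t) *\<^sub>R p)) *\<^sub>R e"
      using extreme_point_of_cone_base_summand[OF \<open>conic C\<close> pos e] by blast
    then have "(1 / t) *\<^sub>R p = (1 / t) *\<^sub>R ((a \<bullet> p) *\<^sub>R e)"
      by simp
    then show ?thesis
      using False by (simp del: scaleR_scaleR)
  qed
  then show ?thesis
    using nonneg[OF p] by (auto simp: conic_hull_explicit)
qed

lemma aff_dim_conic_hull_singleton:
  fixes e :: "'a::euclidean_space"
  assumes "e \<noteq> 0"
  shows "aff_dim (conic hull {e}) = 1"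
proof -
  have "{0, e} \<subseteq> conic hull {e}"
    by (simp add: hull_inc)
  then have "1 \<le> aff_dim (conic hull {e})"
    using aff_dim_subset[of "{0, e}"] assms by (metis aff_dim_2)
  moreover have "conic hull {e} \<subseteq> span {e}"
    by (rule hull_minimal) (auto intro: span_base)
  then have "aff_dim (conic hull {e}) \<le> 1"
    using aff_dim_subset aff_dim_subspace[OF subspace_span, of "{e}"] assms
    by (metis dim_span dim_singleton of_nat_1)
  ultimately show ?thesis
    by simp
qed

lemma cone_ray_of_extreme_point_of_cone_base:
  fixes C :: "'a::euclidean_space set"
  assumes "conic C" and "convex C" and pos: "\<And>y. y \<in> C \<Longrightarrow> y \<noteq> 0 \<Longrightarrow> 0 < a \<bullet> y"
    and e: "e extreme_point_of (C \<inter> {y. a \<bullet> y = 1})"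
  shows "cone_ray C (conic hull {e})"
proof -
  have "e \<in> C" and "a \<bullet> e = 1"
    using e by (auto simp: extreme_point_of_def)
  have summand: "x \<in> conic hull {e}"
    if "x \<in> C" "y \<in> C" "0 < s" "s < 1" "(1 - s) *\<^sub>R x + s *\<^sub>R y \<in> conic hull {e}" for x y s
  proof -
    have "(1 - s) *\<^sub>R x \<in> conic hull {e}"
      by (rule extreme_point_of_cone_base_ray_summand[OF \<open>conic C\<close> pos e])
        (use that \<open>conic C\<close> in \<open>simp_all add: conic_mul\<close>)
    from conicD[OF conic_conic_hull this, of "1 / (1 - s)"] show ?thesis
      using that by simp
  qed
  have "x \<in> conic hull {e} \<and> y \<in> conic hull {e}"
    if "x \<in> C" "y \<in> C" "z \<in> conic hull {e}" "z \<in> open_segment x y" for x y z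
  proof -
    obtain s where "0 < s" "s < 1" "z = (1 - s) *\<^sub>R x + s *\<^sub>R y"
      using \<open>z \<in> open_segment x y\<close> by (auto simp: in_segment)
    then show ?thesis
      using summand[of x y s] summand[of y x "1 - s"] that by (simp add: add.commute)
  qed
  moreover have "conic hull {e} \<subseteq> C"
    using \<open>e \<in> C\<close> \<open>conic C\<close> by (simp add: hull_minimal)
  ultimately have "conic hull {e} face_of C"
    unfolding face_of_def using convex_conic_hull[OF convex_singleton] by blast
  moreover have "aff_dim (conic hull {e}) = 1"
    by (rule aff_dim_conic_hull_singleton) (use \<open>a \<bullet> e = 1\<close> in auto)
  ultimately show ?thesis
    by (simp add: cone_ray_def)
qed

lemma eigenvalue_le_of_interior_eigenvector:
  fixes L :: "'a::real_inner \<Rightarrow> 'a"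
  assumes "linear L" and "L ` C \<subseteq> C" and "conic C"
    and nonneg: "\<And>y. y \<in> C \<Longrightarrow> 0 \<le> a \<bullet> y" and "0 < a \<bullet> e"
    and "u \<in> interior C" and Lu: "L u = m *\<^sub>R u" and "0 < m" and Le: "L e = l *\<^sub>R e"
  shows "l \<le> m"
proof (rule ccontr)
  assume "\<not> l \<le> m"
  then have "1 < l / m"
    using \<open>0 < m\<close> by simp
  obtain r where "0 < r" and ball: "ball u r \<subseteq> C"
    using \<open>u \<in> interior C\<close> mem_interior by blast
  have "e \<noteq> 0"
    using \<open>0 < a \<bullet> e\<close> by auto
  define \<epsilon> where "\<epsilon> = r / (2 * norm e)"
  have "0 < \<epsilon>"
    using \<open>0 < r\<close> \<open>e \<noteq> 0\<close> by (simp add: \<epsilon>_def)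
  have "u - \<epsilon> *\<^sub>R e \<in> C"
    using ball \<open>0 < r\<close> \<open>e \<noteq> 0\<close> by (auto simp: \<epsilon>_def dist_norm)
  have step: "u - (t * (l / m)) *\<^sub>R e \<in> C" if "u - t *\<^sub>R e \<in> C" for t
  proof -
    have "(1 / m) *\<^sub>R L (u - t *\<^sub>R e) \<in> C"
      using that \<open>L ` C \<subseteq> C\<close> \<open>conic C\<close> \<open>0 < m\<close> by (simp add: conic_mul image_subset_iff)
    moreover have "(1 / m) *\<^sub>R L (u - t *\<^sub>R e) = u - (t * (l / m)) *\<^sub>R e"
      using \<open>linear L\<close> Lu Le \<open>0 < m\<close> by (simp add: linear_diff linear_cmul algebra_simps)
    ultimately show ?thesis
      by simp
  qed
  have iterate: "u - (\<epsilon> * (l / m) ^ n) *\<^sub>R e \<in> C" for n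
  proof (induction n)
    case 0
    then show ?case
      using \<open>u - \<epsilon> *\<^sub>R e \<in> C\<close> by simp
  next
    case (Suc n)
    from step[OF Suc] show ?case
      by (simp add: mult.assoc mult.commute mult.left_commute)
  qed
  have "(l / m) ^ n \<le> (a \<bullet> u) / (\<epsilon> * (a \<bullet> e))" for n
  proof -
    have "0 \<le> a \<bullet> (u - (\<epsilon> * (l / m) ^ n) *\<^sub>R e)"
      using nonneg iterate by blast
    then show ?thesis
      using \<open>0 < \<epsilon>\<close> \<open>0 < a \<bullet> e\<close> by (simp add: inner_diff_right field_simps)
  qed
  moreover obtain n where "(a \<bullet> u) / (\<epsilon> * (a \<bullet> e)) < (l / m) ^ n"
    using real_arch_pow[OF \<open>1 < l / m\<close>] by blast
  ultimately show False
    by (meson not_less)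
qed

lemma extreme_point_of_cone_base_eigenvector:
  fixes T :: "'a::euclidean_space \<Rightarrow> 'a"
  assumes "linear T" and "bij T" and "T ` C = C" and "conic C" and "convex C"
    and rays: "\<And>R. cone_ray C R \<Longrightarrow> T ` R = R"
    and pos: "\<And>y. y \<in> C \<Longrightarrow> y \<noteq> 0 \<Longrightarrow> 0 < a \<bullet> y"
    and "u \<in> interior C" and Tu: "T u = mu *\<^sub>R u" and "0 < mu"
    and e: "e extreme_point_of (C \<inter> {y. a \<bullet> y = 1})"
  shows "T e = mu *\<^sub>R e"
proof -
  have "a \<bullet> e = 1"
    using e by (simp add: extreme_point_of_def)
  then have "e \<noteq> 0"
    by auto
  have nonneg: "0 \<le> a \<bullet> y" if "y \<in> C" for y
    using pos[OF that] by (cases "y = 0") auto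
  have "T e \<in> conic hull {e}"
    using rays[OF cone_ray_of_extreme_point_of_cone_base[OF \<open>conic C\<close> \<open>convex C\<close> pos e]]
    by (metis hull_inc image_eqI singletonI)
  then obtain l where "0 \<le> l" and Te: "T e = l *\<^sub>R e"
    by (auto simp: conic_hull_explicit)
  have "inj T"
    using \<open>bij T\<close> bij_is_inj by blast
  then have "T e \<noteq> 0"
    using \<open>e \<noteq> 0\<close> \<open>linear T\<close> by (metis injD linear_0)
  then have "0 < l"
    using \<open>0 \<le> l\<close> Te by force
  have "l \<le> mu"
    using eigenvalue_le_of_interior_eigenvector[OF \<open>linear T\<close> _ \<open>conic C\<close> nonneg _ \<open>u \<in> interior C\<close> Tu
        \<open>0 < mu\<close> Te] \<open>T ` C = C\<close> \<open>a \<bullet> e = 1\<close> by simp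
  have "linear (inv T)"
    using \<open>linear T\<close> \<open>inj T\<close> by (rule inj_linear_imp_inv_linear)
  have inv_eigenvector: "inv T x = (1 / k) *\<^sub>R x" if "T x = k *\<^sub>R x" "0 < k" for x k
  proof -
    have "inv T x = inv T ((1 / k) *\<^sub>R T x)"
      using that by simp
    also have "\<dots> = (1 / k) *\<^sub>R x"
      using \<open>linear (inv T)\<close> \<open>inj T\<close> by (simp add: linear_cmul)
    finally show ?thesis .
  qed
  have "inv T ` C \<subseteq> C"
    using \<open>T ` C = C\<close> \<open>inj T\<close> by (metis image_inv_f_f order_refl)
  from eigenvalue_le_of_interior_eigenvector[OF \<open>linear (inv T)\<close> this \<open>conic C\<close> nonneg _
      \<open>u \<in> interior C\<close> inv_eigenvector[OF Tu \<open>0 < mu\<close>] _ inv_eigenvector[OF Te \<open>0 < l\<close>]]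
  have "1 / l \<le> 1 / mu"
    using \<open>0 < mu\<close> \<open>a \<bullet> e = 1\<close> by simp
  moreover note \<open>l \<le> mu\<close>
  ultimately have "l = mu"
    using \<open>0 < l\<close> \<open>0 < mu\<close> by (simp add: divide_simps)
  then show ?thesis
    using Te by simp
qed

lemma dilation_of_interior_eigenvector:
  fixes T :: "'a::euclidean_space \<Rightarrow> 'a"
  assumes "linear T" and "bij T" and "T ` C = C" and "conic C" and "convex C"
    and rays: "\<And>R. cone_ray C R \<Longrightarrow> T ` R = R"
    and pos: "\<And>y. y \<in> C \<Longrightarrow> y \<noteq> 0 \<Longrightarrow> 0 < a \<bullet> y"
    and base: "compact (C \<inter> {y. a \<bullet> y = 1})"
    and "u \<in> interior C" and "T u = mu *\<^sub>R u" and "0 < mu"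
  shows "T x = mu *\<^sub>R x"
proof -
  define E where "E = {x. T x = mu *\<^sub>R x}"
  have "subspace E"
    using \<open>linear T\<close> by (simp add: E_def subspace_def linear_0 linear_add linear_cmul scaleR_add_right)
  have "{e. e extreme_point_of (C \<inter> {y. a \<bullet> y = 1})} \<subseteq> E"
    using extreme_point_of_cone_base_eigenvector[OF assms(1-5) rays pos assms(9-11)] by (auto simp: E_def)
  then have "convex hull {e. e extreme_point_of (C \<inter> {y. a \<bullet> y = 1})} \<subseteq> E"
    by (rule hull_minimal[where S = convex]) (rule subspace_imp_convex[OF \<open>subspace E\<close>])
  moreover have "C \<inter> {y. a \<bullet> y = 1} = convex hull {e. e extreme_point_of (C \<inter> {y. a \<bullet> y = 1})}"
    by (rule Krein_Milman_Minkowski[OF base]) (intro convex_Int \<open>convex C\<close> convex_hyperplane)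
  ultimately have "C \<inter> {y. a \<bullet> y = 1} \<subseteq> E"
    by simp
  have "C \<subseteq> E"
  proof
    fix y assume "y \<in> C"
    show "y \<in> E"
    proof (cases "y = 0")
      case True
      then show ?thesis
        using \<open>subspace E\<close> subspace_0 by blast
    next
      case False
      then have "0 < a \<bullet> y"
        using pos \<open>y \<in> C\<close> by blast
      then have "(1 / (a \<bullet> y)) *\<^sub>R y \<in> E"
        using \<open>C \<inter> {y. a \<bullet> y = 1} \<subseteq> E\<close> \<open>y \<in> C\<close> \<open>conic C\<close> by (auto simp: conic_mul)
      then have "(a \<bullet> y) *\<^sub>R ((1 / (a \<bullet> y)) *\<^sub>R y) \<in> E"
        using \<open>subspace E\<close> subspace_scale by blast
      then show ?thesis
        using \<open>0 < a \<bullet> y\<close> by simp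
    qed
  qed
  moreover have "span C = UNIV"
    using affine_hull_nonempty_interior[of C] affine_hull_subset_span[of C] \<open>u \<in> interior C\<close> by auto
  ultimately have "x \<in> E"
    using span_minimal[OF _ \<open>subspace E\<close>] by blast
  then show ?thesis
    by (simp add: E_def)
qed

lemma midpoint_in_interior_if_no_common_proper_face:
  fixes C :: "'a::euclidean_space set"
  assumes "convex C" and "interior C \<noteq> {}" and "v \<in> C" and "w \<in> C"
    and no_face: "\<not> (\<exists>F. F face_of C \<and> F \<noteq> C \<and> v \<in> F \<and> w \<in> F)"
  shows "midpoint v w \<in> interior C"
proof (rule ccontr)
  let ?u = "midpoint v w"
  assume "?u \<notin> interior C"
  moreover have "?u \<in> C"
    using \<open>convex C\<close> \<open>v \<in> C\<close> \<open>w \<in> C\<close>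
    by (meson convex_contains_segment midpoint_in_closed_segment subsetD)
  moreover have ri: "rel_interior C = interior C"
    using \<open>interior C \<noteq> {}\<close> by (rule rel_interior_nonempty_interior)
  ultimately obtain b where supp: "\<And>y. y \<in> closure C \<Longrightarrow> b \<bullet> ?u \<le> b \<bullet> y"
    and strict: "\<And>y. y \<in> rel_interior C \<Longrightarrow> b \<bullet> ?u < b \<bullet> y"
    using supporting_hyperplane_relative_frontier[OF \<open>convex C\<close>] closure_subset by (metis subsetD)
  define F where "F = C \<inter> {y. b \<bullet> y = b \<bullet> ?u}"
  have "F face_of C"
    unfolding F_def using supp closure_subset
    by (intro face_of_Int_supporting_hyperplane_ge[OF \<open>convex C\<close>]) auto
  moreover have "F \<noteq> C"
  proof -
    obtain y where "y \<in> interior C"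
      using \<open>interior C \<noteq> {}\<close> by blast
    then have "y \<in> C - F"
      using strict[of y] ri interior_subset by (auto simp: F_def)
    then show ?thesis
      by blast
  qed
  moreover have "v \<in> F" "w \<in> F"
  proof -
    have "b \<bullet> ?u \<le> b \<bullet> v" "b \<bullet> ?u \<le> b \<bullet> w"
      using supp closure_subset \<open>v \<in> C\<close> \<open>w \<in> C\<close> by blast+
    moreover have "b \<bullet> v + b \<bullet> w = 2 * (b \<bullet> ?u)"
      by (simp add: midpoint_def inner_add_right)
    ultimately show "v \<in> F" "w \<in> F"
      using \<open>v \<in> C\<close> \<open>w \<in> C\<close> by (simp_all add: F_def)
  qed
  ultimately show False
    using no_face by blast
qed

lemma dilation_separates_eigenspace:
  fixes C :: "'a::euclidean_space set"
  assumes "conic C" and "0 \<in> C" and "interior C \<noteq> {}" and pointed: "C \<inter> uminus ` C \<subseteq> {0}"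
    and T: "\<And>x. T x = c *\<^sub>R x"
  shows "is_eigenvalue T c \<and> separates_eigenspace C T c"
proof -
  obtain u where u: "u \<in> interior C"
    using \<open>interior C \<noteq> {}\<close> by blast
  have "{0} face_of C"
    using zero_face_of_pointed_cone[OF \<open>conic C\<close> \<open>0 \<in> C\<close> pointed] .
  moreover have "{0} \<noteq> C"
    using \<open>interior C \<noteq> {}\<close> by auto
  ultimately have "u \<noteq> 0"
    using face_of_disjoint_interior u by blast
  moreover have "\<not> (\<exists>F. F face_of C \<and> F \<noteq> C \<and> u \<in> F)"
    using face_of_disjoint_interior u by blast
  moreover have "u \<in> C"
    using u interior_subset by blast
  ultimately show ?thesis
    unfolding is_eigenvalue_def separates_eigenspace_def using T by blast
qed

theorem proposition4p3:
  fixes T :: "'a::euclidean_space \<Rightarrow> 'a" and C :: "'a set"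
  assumes lin: "linear T" and bij: "bij T"
    and fg: "finitely_generated_cone C"
    and full: "interior C \<noteq> {}"
    and pointed: "C \<inter> uminus ` C \<subseteq> {0}"
    and inv: "T ` C = C"
    and rays: "\<And>R. cone_ray C R \<Longrightarrow> T ` R = R"
    and pos: "\<And>mu. is_eigenvalue T mu \<Longrightarrow> mu > 0"
  shows "(\<exists>mu. is_eigenvalue T mu \<and> separates_eigenspace C T mu)
           \<longleftrightarrow> (\<exists>c. \<forall>x. T x = c *\<^sub>R x)"
proof -
  obtain S where "C = convex_cone hull S"
    using fg by (auto simp: finitely_generated_cone_def)
  then have "conic C" and "convex C" and "0 \<in> C"
    by (simp_all add: conic_convex_cone_hull convex_convex_cone_hull convex_cone_hull_contains_0)
  obtain a where a_pos: "\<And>y. y \<in> C \<Longrightarrow> y \<noteq> 0 \<Longrightarrow> 0 < a \<bullet> y"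
    and base: "compact (C \<inter> {y. a \<bullet> y = 1})"
    using pointed_finitely_generated_cone_compact_base[OF fg pointed] by blast
  have "\<forall>x. T x = mu *\<^sub>R x" if "is_eigenvalue T mu" and "separates_eigenspace C T mu" for mu
  proof -
    obtain v w where "v \<in> C" "w \<in> C" and Tv: "T v = mu *\<^sub>R v" and Tw: "T w = mu *\<^sub>R w"
      and "\<not> (\<exists>F. F face_of C \<and> F \<noteq> C \<and> v \<in> F \<and> w \<in> F)"
      using \<open>separates_eigenspace C T mu\<close> by (auto simp: separates_eigenspace_def)
    then have "midpoint v w \<in> interior C"
      using midpoint_in_interior_if_no_common_proper_face[OF \<open>convex C\<close> full] by blast
    moreover have "T (midpoint v w) = mu *\<^sub>R midpoint v w"
      using midpoint_linear_image[OF lin, of v w] Tv Tw by (simp add: midpoint_def scaleR_add_right)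
    ultimately show ?thesis
      using dilation_of_interior_eigenvector[OF lin bij inv \<open>conic C\<close> \<open>convex C\<close> rays a_pos base]
        pos[OF \<open>is_eigenvalue T mu\<close>] by blast
  qed
  then show ?thesis
    using dilation_separates_eigenspace[OF \<open>conic C\<close> \<open>0 \<in> C\<close> full pointed] by metis
qed

end
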